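(* Let $k$ be even, $\pi\in\mathcal B_{k/2}$, $\mathcal G$ a countable set, and let $g=(g_1,\dots,g_k)\in\mathcal G^k$ be a $\pi$-adopted sequence (indices of $g$ read cyclically, $g_{k+1}:=g_1$). If $\{m,m+l\}\in\pi$ with $m<m+l\le k$ and $l>1$, then $$g_m=g_{m+l+1}\quad\text{and}\quad g_{m+1}=g_{m+l}.$$
   Context: A pair-partition of $\{1,\dots,k\}$ is a partition all of whose blocks have exactly two elements; it is crossing if there exist $1\le a<b<c<d\le k$ with $\{a,c\},\{b,d\}\in\pi$, and non-crossing otherwise. For even $k$, $\mathcal B_{k/2}$ denotes the set of non-crossing pair-partitions of $\{1,\dots,k\}$. For $k\ge 4$, $\pi\in\mathcal B_{k/2}$ and a block $\{m,m+1\}\in\pi$ with $1\le m\le k-2$, $\pi\setminus^\bullet\{m,m+1\}\in\mathcal B_{k/2-1}$ denotes the pair-partition of $\{1,\dots,k-2\}$ obtained by deleting the block $\{m,m+1\}$ and relabelling every remaining element $a>m$ as $a-2$. $\pi$-adopted sequences. Let $\mathcal G$ be a countable set and $\pi\in\mathcal B_{k/2}$. A sequence $g=(g_1,\dots,g_k)\in\mathcal G^k$ is $\pi$-adopted, defined recursively in $k$, as follows. For $k=2$ (so $\pi=\{\{1,2\}\}$), $g$ is $\pi$-adopted iff $g_1\neq g_2$. For $k\ge 4$, $g$ is $\pi$-adopted iff for every block of $\pi$ of the form $\{m,m+1\}$ with $1\le m\le k-2$: (a) $g_m=g_{m+2}$ and $g_{m+1}\neq g_s$ for all $s\neq m+1$;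 and (b) the sequence $(g_1,\dots,g_m,g_{m+3},\dots,g_k)\in\mathcal G^{k-2}$, obtained by deleting $g_{m+1}$ and $g_{m+2}$, is $\pi\setminus^\bullet\{m,m+1\}$-adopted. *)

theory Defs
  imports Main "HOL-Library.Countable_Set"
begin

definition pair_partition :: "nat \<Rightarrow> nat set set \<Rightarrow> bool" where
  "pair_partition k \<pi> \<longleftrightarrow>
     (\<forall>B\<in>\<pi>. card B = 2) \<and> \<Union>\<pi> = {1..k} \<and>
     (\<forall>B\<in>\<pi>. \<forall>C\<in>\<pi>. B \<noteq> C \<longrightarrow> B \<inter> C = {})"

definition crossing :: "nat set set \<Rightarrow> bool" where
  "crossing \<pi> \<longleftrightarrow> (\<exists>a b c d. 1 \<le> a \<and> a < b \<and> b < c \<and> c < d \<and> {a, c} \<in> \<pi> \<and> {b, d} \<in> \<pi>)"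

text \<open>NC k \<pi>: \<pi> belongs to B_{k/2} (k even).\<close>
definition NC :: "nat \<Rightarrow> nat set set \<Rightarrow> bool" where
  "NC k \<pi> \<longleftrightarrow> even k \<and> pair_partition k \<pi> \<and> \<not> crossing \<pi>"

definition del_block :: "nat set set \<Rightarrow> nat \<Rightarrow> nat set set" where
  "del_block \<pi> m = (\<lambda>B. (\<lambda>a. if a > m then a - 2 else a) ` B) ` (\<pi> - {{m, m + 1}})"

definition del_seq :: "(nat \<Rightarrow> 'a) \<Rightarrow> nat \<Rightarrow> nat \<Rightarrow> 'a" where
  "del_seq g m = (\<lambda>i. if i \<le> m then g i else g (i + 2))"

function adopted :: "nat \<Rightarrow> nat set set \<Rightarrow> (nat \<Rightarrow> 'a) \<Rightarrow> bool" where
  "adopted k \<pi> g =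
    (if k = 2 then g 1 \<noteq> g 2
     else if 4 \<le> k then
       (\<forall>m. 1 \<le> m \<and> m \<le> k - 2 \<and> {m, m + 1} \<in> \<pi> \<longrightarrow>
          g m = g (m + 2) \<and> (\<forall>s\<in>{1..k}. s \<noteq> m + 1 \<longrightarrow> g (m + 1) \<noteq> g s) \<and>
          adopted (k - 2) (del_block \<pi> m) (del_seq g m))
     else False)"
  by pat_completeness auto
termination by (relation "measure (\<lambda>(k, _, _). k)") auto

definition cyc :: "nat \<Rightarrow> nat \<Rightarrow> nat" where
  "cyc k i = (if i = k + 1 then 1 else i)"

end

theory Submission
  imports Defs
begin

text \<open>Unless \<open>{a, b}\<close> is an adjacent block \<open>{a, a + 1}\<close> with \<open>a + 1 < k\<close>, where
  adoptedness directly gives \<open>g a = g (a + 2)\<close>, non-crossingness supplies another adjacent block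
  \<open>{j, j + 1}\<close>: inside \<open>{a, b}\<close> (the partner of \<open>a + 1\<close> lies between a and b), or before it when
  \<open>{a, b} = {k - 1, k}\<close>. Since \<open>g j = g (j + 2)\<close>, deleting \<open>g (j + 1)\<close> and \<open>g (j + 2)\<close> keeps the
  values at the relabelled neighbours of \<open>{a, b}\<close>, and the shorter sequence is adopted for the
  reduced, still non-crossing, partition.\<close>

declare adopted.simps[simp del]

lemma pair_partition_block_range:
  "pair_partition k \<pi> \<Longrightarrow> B \<in> \<pi> \<Longrightarrow> x \<in> B \<Longrightarrow> 1 \<le> x \<and> x \<le> k"
  unfolding pair_partition_def by (metis UnionI atLeastAtMost_iff)

lemma pair_partition_block_unique:
  "pair_partition k \<pi> \<Longrightarrow> B \<in> \<pi> \<Longrightarrow> C \<in> \<pi> \<Longrightarrow> x \<in> B \<Longrightarrow> x \<in> C \<Longrightarrow> B = C"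
  unfolding pair_partition_def by blast

lemma pair_partition_partner:
  assumes "pair_partition k \<pi>" "1 \<le> x" "x \<le> k"
  obtains y where "y \<noteq> x" "{x, y} \<in> \<pi>"
proof -
  have "x \<in> \<Union>\<pi>" using assms unfolding pair_partition_def by auto
  then obtain B where B: "B \<in> \<pi>" "x \<in> B" by auto
  then obtain u v where "u \<noteq> v" "B = {u, v}"
    using assms(1) unfolding pair_partition_def by (metis card_2_iff)
  with B that show thesis by (metis insert_commute insertE singletonD)
qed

lemma not_crossingD:
  "\<not> crossing \<pi> \<Longrightarrow> 1 \<le> a \<Longrightarrow> a < b \<Longrightarrow> b < c \<Longrightarrow> c < d \<Longrightarrow> {a, c} \<in> \<pi> \<Longrightarrow> {b, d} \<in> \<pi> \<Longrightarrow> False"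
  unfolding crossing_def by blast

lemma NC_adjacent_block_inside:
  assumes nc: "NC k \<pi>" and "{a, b} \<in> \<pi>" "a + 1 < b"
  shows "\<exists>j. a < j \<and> j + 1 < b \<and> {j, j + 1} \<in> \<pi>"
  using assms(2,3)
proof (induction "b - a" arbitrary: a b rule: less_induct)
  case (less a b)
  have pp: "pair_partition k \<pi>" and ncr: "\<not> crossing \<pi>" using nc unfolding NC_def by auto
  have "1 \<le> a" "b \<le> k" using pair_partition_block_range[OF pp less.prems(1)] by auto
  then obtain c where c: "c \<noteq> a + 1" "{a + 1, c} \<in> \<pi>"
    using pair_partition_partner[OF pp, of "a + 1"] less.prems(2) by auto
  have "c \<noteq> a" "c \<noteq> b"
    using pair_partition_block_unique[OF pp c(2) less.prems(1), of a]
      pair_partition_block_unique[OF pp c(2) less.prems(1), of b] less.prems(2)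
    by (auto simp: doubleton_eq_iff)
  moreover have "\<not> c < a"
    using not_crossingD[OF ncr, of c a "a + 1" b] c(2) less.prems
      pair_partition_block_range[OF pp c(2), of c] by (auto simp: insert_commute)
  moreover have "\<not> b < c"
    using not_crossingD[OF ncr \<open>1 \<le> a\<close> _ _ _ less.prems(1) c(2)] less.prems(2) by auto
  ultimately have c_between: "a + 1 < c" "c < b" using c(1) by auto
  show ?case
  proof (cases "c = a + 2")
    case True
    then show ?thesis using c c_between by (intro exI[of _ "a + 1"]) auto
  next
    case False
    have "c - (a + 1) < b - a" "a + 1 + 1 < c" using c_between False by auto
    then obtain j where "a + 1 < j" "j + 1 < c" "{j, j + 1} \<in> \<pi>"
      using less.hyps[of c "a + 1", OF _ c(2)] by auto
    then show ?thesis using c_between by (intro exI[of _ j]) auto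
  qed
qed

lemma NC_adjacent_block_before_last:
  assumes nc: "NC k \<pi>" and last: "{k - 1, k} \<in> \<pi>" and "4 \<le> k"
  shows "\<exists>j. j + 1 < k - 1 \<and> {j, j + 1} \<in> \<pi>"
proof -
  have pp: "pair_partition k \<pi>" using nc unfolding NC_def by auto
  obtain c where c: "c \<noteq> 1" "{1, c} \<in> \<pi>" using pair_partition_partner[OF pp, of 1] \<open>4 \<le> k\<close> by auto
  have "c \<noteq> k - 1" "c \<noteq> k"
    using pair_partition_block_unique[OF pp c(2) last, of "k - 1"]
      pair_partition_block_unique[OF pp c(2) last, of k] \<open>4 \<le> k\<close>
    by (auto simp: doubleton_eq_iff)
  then have c_range: "1 < c" "c \<le> k - 2" using pair_partition_block_range[OF pp c(2), of c] c(1) by auto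
  show ?thesis
  proof (cases "c = 2")
    case True
    then show ?thesis using c \<open>4 \<le> k\<close> by (intro exI[of _ 1]) (auto simp: numeral_2_eq_2)
  next
    case False
    then obtain j where "1 < j" "j + 1 < c" "{j, j + 1} \<in> \<pi>"
      using NC_adjacent_block_inside[OF nc c(2)] c_range by auto
    then show ?thesis using c_range by (intro exI[of _ j]) auto
  qed
qed

lemma NC_other_adjacent_block:
  assumes nc: "NC k \<pi>" and "4 \<le> k" and ab: "{a, b} \<in> \<pi>" "a < b"
    and not_adjacent: "\<not> (b = a + 1 \<and> b < k)"
  shows "\<exists>j. {j, j + 1} \<in> \<pi> \<and> {a, b} \<noteq> {j, j + 1} \<and> j + 2 \<le> k"
proof -
  have "b \<le> k" using nc ab(1) pair_partition_block_range unfolding NC_def by blast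
  then consider "a + 1 < b" | "a = k - 1" "b = k" using not_adjacent ab(2) by linarith
  then show ?thesis
  proof cases
    case 1
    then obtain j where "a < j" "j + 1 < b" "{j, j + 1} \<in> \<pi>"
      using NC_adjacent_block_inside[OF nc ab(1)] by auto
    then show ?thesis using \<open>b \<le> k\<close> by (auto simp: doubleton_eq_iff)
  next
    case 2
    then obtain j where "j + 1 < a" "{j, j + 1} \<in> \<pi>"
      using NC_adjacent_block_before_last[OF nc _ \<open>4 \<le> k\<close>] ab(1) by auto
    then show ?thesis using 2 by (auto simp: doubleton_eq_iff)
  qed
qed

definition shift_down :: "nat \<Rightarrow> nat \<Rightarrow> nat" where
  "shift_down j a = (if j < a then a - 2 else a)"

definition shift_up :: "nat \<Rightarrow> nat \<Rightarrow> nat" where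
  "shift_up j y = (if j \<le> y then y + 2 else y)"

lemma shift_down_shift_up [simp]: "shift_down j (shift_up j y) = y"
  unfolding shift_down_def shift_up_def by auto

lemma shift_up_shift_down: "x \<noteq> j \<Longrightarrow> x \<noteq> j + 1 \<Longrightarrow> shift_up j (shift_down j x) = x"
  unfolding shift_down_def shift_up_def by auto

lemma shift_up_not_in_gap: "shift_up j y \<noteq> j" "shift_up j y \<noteq> j + 1"
  unfolding shift_up_def by auto

lemma strict_mono_shift_up: "strict_mono (shift_up j)"
  unfolding strict_mono_def shift_up_def by auto

lemma shift_up_in_range_iff:
  "1 \<le> j \<Longrightarrow> j < k \<Longrightarrow> shift_up j y \<in> {1..k} \<longleftrightarrow> y \<in> {1..k - 2}"
  unfolding shift_up_def by auto

lemma del_block_memI: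
  "B \<in> \<pi> \<Longrightarrow> B \<noteq> {j, j + 1} \<Longrightarrow> shift_down j ` B \<in> del_block \<pi> j"
  unfolding del_block_def shift_down_def by auto

lemma del_block_lift:
  assumes pp: "pair_partition k \<pi>" and gap: "{j, j + 1} \<in> \<pi>" and "B' \<in> del_block \<pi> j"
  shows "shift_up j ` B' \<in> \<pi>"
proof -
  obtain B where B: "B \<in> \<pi>" "B \<noteq> {j, j + 1}" "B' = shift_down j ` B"
    using assms(3) unfolding del_block_def shift_down_def by auto
  have "x \<noteq> j \<and> x \<noteq> j + 1" if "x \<in> B" for x
    using pair_partition_block_unique[OF pp B(1) gap, of x] that B(2) by auto
  then have "shift_up j ` B' = B" unfolding B(3) image_image by (simp add: shift_up_shift_down)
  with B(1) show ?thesis by simp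
qed

lemma Union_del_block:
  assumes pp: "pair_partition k \<pi>" and gap: "{j, j + 1} \<in> \<pi>"
  shows "\<Union>(del_block \<pi> j) = {1..k - 2}"
proof -
  have UN: "\<Union>\<pi> = {1..k}" using pp unfolding pair_partition_def by simp
  have "1 \<le> j" "j < k"
    using pair_partition_block_range[OF pp gap, of j] pair_partition_block_range[OF pp gap, of "j + 1"] by auto
  note in_range = shift_up_in_range_iff[OF this]
  show ?thesis
  proof (intro equalityI subsetI)
    fix y assume "y \<in> \<Union>(del_block \<pi> j)"
    then obtain B' where "B' \<in> del_block \<pi> j" "y \<in> B'" by auto
    then have "shift_up j y \<in> \<Union>\<pi>" using del_block_lift[OF pp gap] by blast
    then show "y \<in> {1..k - 2}" using UN in_range by simp
  next
    fix y assume "y \<in> {1..k - 2}"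
    then have "shift_up j y \<in> \<Union>\<pi>" using UN in_range by simp
    then obtain B where B: "B \<in> \<pi>" "shift_up j y \<in> B" by auto
    then have "B \<noteq> {j, j + 1}" using shift_up_not_in_gap by auto
    with B(1) have "shift_down j ` B \<in> del_block \<pi> j" by (rule del_block_memI)
    moreover have "y \<in> shift_down j ` B" using B(2) by (metis image_eqI shift_down_shift_up)
    ultimately show "y \<in> \<Union>(del_block \<pi> j)" by blast
  qed
qed

lemma not_crossing_del_block:
  assumes ncr: "\<not> crossing \<pi>" and pp: "pair_partition k \<pi>" and gap: "{j, j + 1} \<in> \<pi>"
  shows "\<not> crossing (del_block \<pi> j)"
proof
  assume "crossing (del_block \<pi> j)"
  then obtain a b c d where "1 \<le> a" "a < b" "b < c" "c < d"
    and ac: "{a, c} \<in> del_block \<pi> j" and bd: "{b, d} \<in> del_block \<pi> j"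
    unfolding crossing_def by blast
  moreover have "{shift_up j a, shift_up j c} \<in> \<pi>" "{shift_up j b, shift_up j d} \<in> \<pi>"
    using del_block_lift[OF pp gap ac] del_block_lift[OF pp gap bd] by simp_all
  moreover have "1 \<le> shift_up j a" using \<open>1 \<le> a\<close> unfolding shift_up_def by simp
  ultimately show False
    using not_crossingD[OF ncr] strict_monoD[OF strict_mono_shift_up] by blast
qed

lemma NC_del_block:
  assumes nc: "NC k \<pi>" and gap: "{j, j + 1} \<in> \<pi>"
  shows "NC (k - 2) (del_block \<pi> j)"
proof -
  have pp: "pair_partition k \<pi>" and ncr: "\<not> crossing \<pi>" and "even k"
    using nc unfolding NC_def by auto
  note lift = del_block_lift[OF pp gap]
  have card: "card B' = 2" if "B' \<in> del_block \<pi> j" for B'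
  proof -
    have "card (shift_up j ` B') = 2" using lift[OF that] pp unfolding pair_partition_def by blast
    then show ?thesis by (simp add: card_image strict_mono_imp_inj_on[OF strict_mono_shift_up])
  qed
  have disjoint: "B' \<inter> C' = {}" if "B' \<in> del_block \<pi> j" "C' \<in> del_block \<pi> j" "B' \<noteq> C'" for B' C'
  proof (rule ccontr)
    assume "B' \<inter> C' \<noteq> {}"
    then obtain y where "shift_up j y \<in> shift_up j ` B'" "shift_up j y \<in> shift_up j ` C'" by blast
    then have "shift_up j ` B' = shift_up j ` C'"
      using pair_partition_block_unique[OF pp lift[OF that(1)] lift[OF that(2)]] by simp
    then have "shift_down j ` shift_up j ` B' = shift_down j ` shift_up j ` C'" by simp
    with that(3) show False by (simp add: image_image)
  qed
  show ?thesis
    using \<open>even k\<close> card Union_del_block[OF pp gap] disjoint not_crossing_del_block[OF ncr pp gap]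
    unfolding NC_def pair_partition_def by auto
qed

lemma adopted_cases: "adopted k \<pi> g \<Longrightarrow> k = 2 \<or> 4 \<le> k"
  by (subst (asm) adopted.simps) (auto split: if_splits)

lemma adopted_adjacent_block:
  assumes "adopted k \<pi> g" "{j, j + 1} \<in> \<pi>" "1 \<le> j" "j + 2 \<le> k"
  shows "g j = g (j + 2)" "adopted (k - 2) (del_block \<pi> j) (del_seq g j)"
  using assms adopted_cases[OF assms(1)] by (subst (asm) adopted.simps; auto)+

lemma del_seq_shift_down: "g j = g (j + 2) \<Longrightarrow> x \<noteq> j + 1 \<Longrightarrow> del_seq g j (shift_down j x) = g x"
  unfolding del_seq_def shift_down_def by (cases "x = j + 2") (auto simp: Suc_diff_Suc numeral_2_eq_2)

lemma cyc_shift_down: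
  "1 \<le> j \<Longrightarrow> j + 2 \<le> k \<Longrightarrow> b \<le> k \<Longrightarrow> b \<noteq> j \<Longrightarrow> b \<noteq> j + 1 \<Longrightarrow>
    cyc (k - 2) (shift_down j b + 1) = shift_down j (cyc k (b + 1))"
  unfolding cyc_def shift_down_def by auto

lemma adopted_outer_neighbours:
  "adopted k \<pi> g \<Longrightarrow> NC k \<pi> \<Longrightarrow> {a, b} \<in> \<pi> \<Longrightarrow> a < b \<Longrightarrow> g a = g (cyc k (b + 1))"
proof (induction k arbitrary: \<pi> g a b rule: less_induct)
  case (less k)
  have pp: "pair_partition k \<pi>" using less.prems(2) unfolding NC_def by auto
  have ab: "1 \<le> a" "b \<le> k" using pair_partition_block_range[OF pp less.prems(3)] by auto
  consider (single) "k = 2" | (adjacent) "b = a + 1" "b < k"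
    | (reducible) j where "{j, j + 1} \<in> \<pi>" "{a, b} \<noteq> {j, j + 1}" "j + 2 \<le> k"
  proof (cases "k = 2 \<or> (b = a + 1 \<and> b < k)")
    case True
    then show thesis using single adjacent by blast
  next
    case False
    then have "4 \<le> k" using adopted_cases[OF less.prems(1)] by auto
    then show thesis
      using NC_other_adjacent_block[OF less.prems(2) _ less.prems(3,4)] False reducible by blast
  qed
  then show ?case
  proof cases
    case single
    then have "a = 1" "b = 2" using ab less.prems(4) by auto
    then show ?thesis using single by (simp add: cyc_def)
  next
    case adjacent
    then show ?thesis
      using adopted_adjacent_block(1)[OF less.prems(1), of a] less.prems(3) ab by (simp add: cyc_def)
  next
    case (reducible j)
    have "1 \<le> j" using pair_partition_block_range[OF pp reducible(1), of j] by simp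
    note reduced = adopted_adjacent_block[OF less.prems(1) reducible(1) \<open>1 \<le> j\<close> reducible(3)]
    have off_gap: "a \<noteq> j" "a \<noteq> j + 1" "b \<noteq> j" "b \<noteq> j + 1"
      using pair_partition_block_unique[OF pp less.prems(3) reducible(1)] reducible(2) by blast+
    have "{shift_down j a, shift_down j b} \<in> del_block \<pi> j"
      using del_block_memI[OF less.prems(3) reducible(2)] by simp
    moreover have "shift_down j a < shift_down j b"
      using less.prems(4) off_gap unfolding shift_down_def by auto
    ultimately have "del_seq g j (shift_down j a) = del_seq g j (cyc (k - 2) (shift_down j b + 1))"
      using less.IH[of "k - 2"] reduced(2) NC_del_block[OF less.prems(2) reducible(1)] reducible(3)
      by simp
    also have "\<dots> = del_seq g j (shift_down j (cyc k (b + 1)))"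
      using cyc_shift_down[OF \<open>1 \<le> j\<close> reducible(3) ab(2) off_gap(3,4)] by simp
    finally show ?thesis
      using del_seq_shift_down[OF reduced(1)] off_gap \<open>1 \<le> j\<close> by (simp add: cyc_def)
  qed
qed

lemma adopted_inner_neighbours:
  "adopted k \<pi> g \<Longrightarrow> NC k \<pi> \<Longrightarrow> {a, b} \<in> \<pi> \<Longrightarrow> a + 1 < b \<Longrightarrow> g (a + 1) = g b"
proof (induction k arbitrary: \<pi> g a b rule: less_induct)
  case (less k)
  have pp: "pair_partition k \<pi>" using less.prems(2) unfolding NC_def by auto
  have ab: "1 \<le> a" "b \<le> k" using pair_partition_block_range[OF pp less.prems(3)] by auto
  obtain j where j: "a < j" "j + 1 < b" "{j, j + 1} \<in> \<pi>"
    using NC_adjacent_block_inside[OF less.prems(2,3,4)] by auto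
  have "1 \<le> j" "j + 2 \<le> k" using j ab by auto
  note reduced = adopted_adjacent_block[OF less.prems(1) j(3) this]
  show ?case
  proof (cases "b = a + 3")
    case True
    then have "j = a + 1" using j by simp
    then show ?thesis using reduced(1) True by (simp add: numeral_eq_Suc)
  next
    case False
    have "{a, b} \<noteq> {j, j + 1}" using j by (auto simp: doubleton_eq_iff)
    then have "{shift_down j a, shift_down j b} \<in> del_block \<pi> j"
      using del_block_memI[OF less.prems(3)] by simp
    moreover have "shift_down j a = a" "shift_down j b = b - 2" using j unfolding shift_down_def by auto
    ultimately have "del_seq g j (a + 1) = del_seq g j (shift_down j b)"
      using less.IH[of "k - 2"] reduced(2) NC_del_block[OF less.prems(2) j(3)] j False \<open>j + 2 \<le> k\<close>
      by simp
    then show ?thesis using del_seq_shift_down[OF reduced(1), of b] j unfolding del_seq_def by simp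
  qed
qed

theorem mainTheorem2:
  fixes k m l :: nat and \<pi> :: "nat set set" and G :: "'a set" and g :: "nat \<Rightarrow> 'a"
  assumes "even k"
    and "NC k \<pi>"
    and "countable G"
    and "\<forall>i\<in>{1..k}. g i \<in> G"
    and "adopted k \<pi> g"
    and "{m, m + l} \<in> \<pi>"
    and "m + l \<le> k"
    and "l > 1"
  shows "g m = g (cyc k (m + l + 1)) \<and> g (m + 1) = g (m + l)"
  using adopted_outer_neighbours[OF assms(5,2,6)] adopted_inner_neighbours[OF assms(5,2,6)] \<open>l > 1\<close>
  by simp

end
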